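(* Let $N\ge2$ and let $Y$ be a real symmetric $N\times N$ matrix. If $\|Y-I\|_F^2\le1$, then $Y$ is scaled diagonally dominant. If $\|Y-I\|_F^2\le\frac{2}{N+1}$, then $Y$ is diagonally dominant.
   Context: A symmetric matrix $X$ is diagonally dominant if $X(i,i)\ge\sum_{j\ne i}|X(i,j)|$ for all $i$; it is scaled diagonally dominant if $X=DYD$ for some positive diagonal matrix $D$ and some diagonally dominant $Y$. *)

theory Defs
  imports "HOL-Analysis.Analysis"
begin

definition symmetric_matrix :: "real ^'n^'n \<Rightarrow> bool" where
  "symmetric_matrix X \<longleftrightarrow> transpose X = X"

definition diag_dominant :: "real ^'n^'n \<Rightarrow> bool" where
  "diag_dominant X \<longleftrightarrow> symmetric_matrix X \<and>
     (\<forall>i. X $ i $ i \<ge> (\<Sum>j\<in>UNIV - {i}. \<bar>X $ i $ j\<bar>))"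

definition diag_matrix :: "('n \<Rightarrow> real) \<Rightarrow> real ^'n^'n" where
  "diag_matrix d = (\<chi> i j. if i = j then d i else 0)"

definition scaled_diag_dominant :: "real ^'n^'n \<Rightarrow> bool" where
  "scaled_diag_dominant X \<longleftrightarrow>
     (\<exists>d Y. (\<forall>i. d i > 0) \<and> diag_dominant Y \<and>
            X = diag_matrix d ** Y ** diag_matrix d)"

definition frob_norm_sq :: "real ^'n^'n \<Rightarrow> real" where
  "frob_norm_sq A = (\<Sum>i\<in>UNIV. \<Sum>j\<in>UNIV. (A $ i $ j)^2)"

end

theory Submission
  imports Defs
begin

(* Let M be the comparison matrix of Y: same diagonal, off-diagonal entries -|Y_ij|.
   It is exactly as far from I as Y in Frobenius norm, and |x^T E x| <= |E|_F |x|^2, so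
   |M - I|_F <= 1 makes M positive semidefinite.  A positive semidefinite symmetric Z-matrix
   admits a vector w > 0 with M w >= 0 (eliminate one index by a Schur complement and
   induct), and M w >= 0 says precisely that diag(w) Y diag(w) is diagonally dominant.

   For the second claim fix a row i, let a = 1 - Y_ii and q = sum_{j<>i} Y_ij^2.  Row and
   column i contribute a^2 + 2q to |Y - I|_F^2, Cauchy-Schwarz bounds (sum_{j<>i} |Y_ij|)^2
   by (N - 1) q, and min_a (a^2 + 2 (1 - a)^2 / (N - 1)) = 2 / (N + 1), attained at
   a = 2 / (N + 1). *)

definition quad_form :: "'a set \<Rightarrow> ('a \<Rightarrow> 'a \<Rightarrow> real) \<Rightarrow> ('a \<Rightarrow> real) \<Rightarrow> real" where
  "quad_form J K x = (\<Sum>i\<in>J. \<Sum>j\<in>J. x i * K i j * x j)"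

definition psd_on :: "'a set \<Rightarrow> ('a \<Rightarrow> 'a \<Rightarrow> real) \<Rightarrow> bool" where
  "psd_on J K \<longleftrightarrow> (\<forall>x. 0 \<le> quad_form J K x)"

definition symmetric_on :: "'a set \<Rightarrow> ('a \<Rightarrow> 'a \<Rightarrow> real) \<Rightarrow> bool" where
  "symmetric_on J K \<longleftrightarrow> (\<forall>i\<in>J. \<forall>j\<in>J. K i j = K j i)"

definition Z_matrix_on :: "'a set \<Rightarrow> ('a \<Rightarrow> 'a \<Rightarrow> real) \<Rightarrow> bool" where
  "Z_matrix_on J K \<longleftrightarrow> (\<forall>i\<in>J. \<forall>j\<in>J. i \<noteq> j \<longrightarrow> K i j \<le> 0)"

definition schur_complement :: "('a \<Rightarrow> 'a \<Rightarrow> real) \<Rightarrow> 'a \<Rightarrow> 'a \<Rightarrow> 'a \<Rightarrow> real" where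
  "schur_complement K n = (\<lambda>i j. K i j - K i n * K j n / K n n)"

lemma quad_form_eq_on_support:
  assumes "finite J" "A \<subseteq> J" "\<forall>i\<in>J - A. x i = 0"
  shows "quad_form J K x = quad_form A K x"
proof -
  have "quad_form J K x = (\<Sum>i\<in>A. \<Sum>j\<in>J. x i * K i j * x j)"
    unfolding quad_form_def by (rule sum.mono_neutral_right) (use assms in auto)
  also have "\<dots> = quad_form A K x"
    unfolding quad_form_def by (intro sum.cong refl sum.mono_neutral_right) (use assms in auto)
  finally show ?thesis .
qed

lemma quad_form_sq_le:
  "(quad_form J E x)\<^sup>2 \<le> (\<Sum>i\<in>J. \<Sum>j\<in>J. (E i j)\<^sup>2) * (\<Sum>i\<in>J. (x i)\<^sup>2)\<^sup>2"
proof -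
  have "(quad_form J E x)\<^sup>2 = (\<Sum>(i, j)\<in>J \<times> J. E i j * (x i * x j))\<^sup>2"
    unfolding quad_form_def sum.cartesian_product by (simp add: mult_ac)
  also have "\<dots> \<le> (\<Sum>(i, j)\<in>J \<times> J. (E i j)\<^sup>2) * (\<Sum>(i, j)\<in>J \<times> J. (x i * x j)\<^sup>2)"
    using Cauchy_Schwarz_ineq_sum[of "\<lambda>(i, j). E i j" "\<lambda>(i, j). x i * x j" "J \<times> J"]
    by (simp add: case_prod_unfold)
  also have "\<dots> = (\<Sum>i\<in>J. \<Sum>j\<in>J. (E i j)\<^sup>2) * (\<Sum>i\<in>J. (x i)\<^sup>2)\<^sup>2"
    by (simp add: sum.cartesian_product[symmetric] power2_eq_square sum_product mult_ac)
  finally show ?thesis .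
qed

lemma psd_on_if_frobenius_dist_id_le_1:
  assumes "finite J" "(\<Sum>i\<in>J. \<Sum>j\<in>J. (K i j - (if i = j then 1 else 0))\<^sup>2) \<le> 1"
  shows "psd_on J K"
  unfolding psd_on_def
proof
  fix x :: "'a \<Rightarrow> real"
  define E where "E i j = K i j - (if i = j then 1 else 0)" for i j
  define S where "S = (\<Sum>i\<in>J. (x i)\<^sup>2)"
  have S_nonneg: "0 \<le> S" unfolding S_def by (simp add: sum_nonneg)
  have "quad_form J K x = quad_form J E x + (\<Sum>i\<in>J. \<Sum>j\<in>J. if i = j then x i * x j else 0)"
    unfolding quad_form_def sum.distrib[symmetric] E_def by (intro sum.cong refl) (simp add: algebra_simps)
  also have "\<dots> = quad_form J E x + S"
    unfolding S_def using assms(1) by (simp add: power2_eq_square)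
  finally have K_eq: "quad_form J K x = quad_form J E x + S" .
  have "(quad_form J E x)\<^sup>2 \<le> 1 * S\<^sup>2"
    using quad_form_sq_le[of J E x] assms(2) unfolding E_def S_def
    by (meson mult_right_mono order_trans zero_le_power2)
  hence "\<bar>quad_form J E x\<bar> \<le> S"
    using S_nonneg by (simp add: power2_le_iff_abs_le)
  thus "0 \<le> quad_form J K x" using K_eq by linarith
qed

lemma psd_on_diag_nonneg:
  assumes "finite J" "psd_on J K" "n \<in> J"
  shows "0 \<le> K n n"
proof -
  let ?x = "\<lambda>i. if i = n then 1 else 0"
  have "quad_form J K ?x = quad_form {n} K ?x"
    by (rule quad_form_eq_on_support) (use assms in auto)
  also have "\<dots> = K n n" by (simp add: quad_form_def)
  finally show ?thesis using assms(2) unfolding psd_on_def by metis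
qed

lemma psd_on_zero_diag_imp_zero_entry:
  assumes fin: "finite J" and sym: "symmetric_on J K" and psd: "psd_on J K"
    and n: "n \<in> J" and j: "j \<in> J" and zero: "K n n = 0"
  shows "K j n = 0"
proof (cases "j = n")
  case False
  have Kjj: "0 \<le> K j j" using psd_on_diag_nonneg[OF fin psd j] .
  define t where "t = - K j n / (K j j + 1)"
  let ?x = "\<lambda>i. if i = j then t else if i = n then 1 else 0"
  have "quad_form J K ?x = quad_form {j, n} K ?x"
    by (rule quad_form_eq_on_support) (use fin n j in auto)
  also have "\<dots> = t * (t * K j j + 2 * K j n)"
    using False zero sym n j unfolding quad_form_def symmetric_on_def
    by (simp add: algebra_simps)
  finally have "0 \<le> t * (t * K j j + 2 * K j n)"
    using psd unfolding psd_on_def by metis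
  moreover have "(K j j + 1)\<^sup>2 * (t * (t * K j j + 2 * K j n)) = - (K j n)\<^sup>2 * (K j j + 2)"
    unfolding t_def using Kjj by (simp add: field_simps power2_eq_square add_nonneg_eq_0_iff)
  ultimately have "(K j n)\<^sup>2 * (K j j + 2) \<le> 0"
    by (metis neg_0_le_iff_le mult_minus_left zero_le_mult_iff zero_le_power2)
  thus ?thesis using Kjj by (simp add: mult_le_0_iff)
qed (use zero in simp)

lemma quad_form_insert:
  assumes "finite J" "n \<notin> J" "symmetric_on (insert n J) K"
  shows "quad_form (insert n J) K x
           = K n n * (x n)\<^sup>2 + 2 * x n * (\<Sum>j\<in>J. K j n * x j) + quad_form J K x"
proof -
  have "K n j = K j n" if "j \<in> J" for j
    using assms(3) that unfolding symmetric_on_def by blast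
  then have "(\<Sum>j\<in>J. x n * K n j * x j) = (\<Sum>j\<in>J. x n * (K j n * x j))"
    by (intro sum.cong refl) (metis mult.assoc)
  also have "\<dots> = x n * (\<Sum>j\<in>J. K j n * x j)"
    by (simp add: sum_distrib_left)
  finally have "(\<Sum>j\<in>J. x n * K n j * x j) = x n * (\<Sum>j\<in>J. K j n * x j)" .
  moreover have "(\<Sum>i\<in>J. x i * K i n * x n) = x n * (\<Sum>j\<in>J. K j n * x j)"
    by (simp add: sum_distrib_left mult_ac)
  moreover have "quad_form (insert n J) K x = x n * K n n * x n + (\<Sum>j\<in>J. x n * K n j * x j)
      + (\<Sum>i\<in>J. x i * K i n * x n) + quad_form J K x"
    using assms(1,2) unfolding quad_form_def by (simp add: sum.distrib)
  ultimately show ?thesis by (simp add: power2_eq_square)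
qed

lemma quad_form_schur_complement:
  "quad_form J (schur_complement K n) x = quad_form J K x - (\<Sum>j\<in>J. K j n * x j)\<^sup>2 / K n n"
proof -
  have "(\<Sum>j\<in>J. K j n * x j)\<^sup>2 = (\<Sum>i\<in>J. \<Sum>j\<in>J. x i * (K i n * K j n) * x j)"
    by (simp add: power2_eq_square sum_product mult_ac)
  thus ?thesis
    unfolding quad_form_def schur_complement_def
    by (simp add: algebra_simps sum_subtractf sum_divide_distrib)
qed

text \<open>If \<open>K n n = 0\<close>, the convention \<open>x / 0 = 0\<close> makes the Schur complement the
  restriction of \<open>K\<close> to \<open>J\<close>; the lemma holds in this case too.\<close>
lemma psd_on_schur_complement:
  assumes "finite J" "n \<notin> J" "symmetric_on (insert n J) K" "psd_on (insert n J) K"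
  shows "psd_on J (schur_complement K n)"
  unfolding psd_on_def
proof
  fix x :: "'a \<Rightarrow> real"
  define c where "c = (\<Sum>j\<in>J. K j n * x j)"
  define x' where "x' = x(n := - c / K n n)"
  have "(\<Sum>j\<in>J. K j n * x' j) = c"
    unfolding c_def x'_def using assms(2) by (intro sum.cong) auto
  moreover have "quad_form J K x' = quad_form J K x"
    unfolding quad_form_def x'_def using assms(2) by (intro sum.cong) auto
  ultimately have "quad_form (insert n J) K x' = K n n * (x' n)\<^sup>2 + 2 * x' n * c + quad_form J K x"
    using quad_form_insert[OF assms(1-3)] by simp
  also have "\<dots> = quad_form J (schur_complement K n) x"
    unfolding quad_form_schur_complement c_def[symmetric] x'_def
    by (cases "K n n = 0") (simp_all add: field_simps power2_eq_square)
  finally show "0 \<le> quad_form J (schur_complement K n) x"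
    using assms(4) unfolding psd_on_def by metis
qed

lemma symmetric_on_subset: "symmetric_on J K \<Longrightarrow> I \<subseteq> J \<Longrightarrow> symmetric_on I K"
  unfolding symmetric_on_def by blast

lemma symmetric_on_schur_complement:
  "symmetric_on J K \<Longrightarrow> symmetric_on J (schur_complement K n)"
  unfolding symmetric_on_def schur_complement_def by (simp add: mult.commute)

lemma Z_matrix_on_schur_complement:
  assumes "n \<notin> J" "Z_matrix_on (insert n J) K" "0 \<le> K n n"
  shows "Z_matrix_on J (schur_complement K n)"
  unfolding Z_matrix_on_def schur_complement_def
proof (intro ballI impI)
  fix i j assume "i \<in> J" "j \<in> J" "i \<noteq> j"
  then have "K i j \<le> 0" "K i n \<le> 0" "K j n \<le> 0"
    using assms(1,2) unfolding Z_matrix_on_def by force+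
  moreover have "0 \<le> K i n * K j n / K n n"
    using calculation assms(3) by (simp add: zero_le_mult_iff)
  ultimately show "K i j - K i n * K j n / K n n \<le> 0"
    by linarith
qed

lemma sum_schur_complement:
  "(\<Sum>j\<in>J. K i j * w j)
     = (\<Sum>j\<in>J. schur_complement K n i j * w j) + K i n * (\<Sum>j\<in>J. K j n * w j) / K n n"
  unfolding schur_complement_def
  by (simp add: algebra_simps sum_subtractf sum_divide_distrib sum_distrib_left)

lemma pos_vector_insert:
  assumes fin: "finite J" and n: "n \<notin> J"
    and sym: "symmetric_on (insert n J) K" and Z: "Z_matrix_on (insert n J) K"
    and psd: "psd_on (insert n J) K"
    and pos: "\<forall>i\<in>J. 0 < w i"
    and schur_row: "\<forall>i\<in>J. 0 \<le> (\<Sum>j\<in>J. schur_complement K n i j * w j)"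
  obtains v where "\<forall>i\<in>insert n J. 0 < v i" "\<forall>i\<in>insert n J. 0 \<le> (\<Sum>j\<in>insert n J. K i j * v j)"
proof -
  define c where "c = (\<Sum>j\<in>J. K j n * w j)"
  \<comment> \<open>for \<open>c \<noteq> 0\<close> this kills the coupling terms \<open>K i n * (v n + c / K n n)\<close> of \<open>row_J\<close>;
     \<open>c = 0\<close> forces column \<open>n\<close> to vanish on \<open>J\<close>\<close>
  define v where "v = w(n := if c = 0 then 1 else - c / K n n)"
  have v_J: "v j = w j" if "j \<in> J" for j
    using n that unfolding v_def by auto
  have col_nonpos: "K j n \<le> 0" if "j \<in> J" for j
    using Z n that unfolding Z_matrix_on_def by force
  have Knn: "0 \<le> K n n"
    using psd_on_diag_nonneg[OF _ psd] fin by simp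
  have terms_nonpos: "K j n * w j \<le> 0" if "j \<in> J" for j
    using col_nonpos[OF that] pos that by (simp add: mult_nonpos_nonneg less_imp_le)
  have row_n: "(\<Sum>j\<in>insert n J. K n j * v j) = K n n * v n + c"
  proof -
    have "K n j = K j n" if "j \<in> J" for j
      using sym that unfolding symmetric_on_def by blast
    then have "(\<Sum>j\<in>J. K n j * v j) = c"
      unfolding c_def by (intro sum.cong refl) (metis v_J)
    then show ?thesis using fin n by simp
  qed
  have row_J: "(\<Sum>j\<in>insert n J. K i j * v j)
      = K i n * (v n + c / K n n) + (\<Sum>j\<in>J. schur_complement K n i j * w j)" for i
  proof -
    have "(\<Sum>j\<in>J. K i j * v j) = (\<Sum>j\<in>J. K i j * w j)"
      by (intro sum.cong refl) (metis v_J)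
    then show ?thesis
      using fin n sum_schur_complement[of K i w J n] unfolding c_def
      by (simp add: algebra_simps)
  qed
  have "0 < v n \<and> 0 \<le> K n n * v n + c \<and> (\<forall>i\<in>J. K i n * (v n + c / K n n) = 0)"
  proof (cases "c = 0")
    case True
    have "K j n = 0" if "j \<in> J" for j
    proof -
      have "(\<Sum>j\<in>J. - (K j n * w j)) = 0"
        using True unfolding c_def by (simp add: sum_negf)
      then have "K j n * w j = 0"
        using fin terms_nonpos that by (subst (asm) sum_nonneg_eq_0_iff) auto
      then show ?thesis using pos that by auto
    qed
    then show ?thesis using True Knn by (simp add: v_def)
  next
    case False
    have "c \<le> 0"
      unfolding c_def using terms_nonpos by (rule sum_nonpos)
    then have "c < 0"
      using False by simp
    moreover have "K n n \<noteq> 0"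
    proof
      assume "K n n = 0"
      then have "K j n = 0" if "j \<in> J" for j
        using psd_on_zero_diag_imp_zero_entry[OF _ sym psd] fin that by simp
      then show False using False unfolding c_def by simp
    qed
    ultimately show ?thesis
      using Knn False by (simp add: v_def divide_neg_pos)
  qed
  then show ?thesis
    using that[of v] pos v_J schur_row row_n row_J by auto
qed

lemma psd_Z_matrix_on_pos_vector:
  assumes "finite J" "symmetric_on J K" "Z_matrix_on J K" "psd_on J K"
  shows "\<exists>w. (\<forall>i\<in>J. 0 < w i) \<and> (\<forall>i\<in>J. 0 \<le> (\<Sum>j\<in>J. K i j * w j))"
  using assms
proof (induction J arbitrary: K rule: finite_induct)
  case empty
  show ?case by simp
next
  case (insert n J)
  have "0 \<le> K n n"
    using psd_on_diag_nonneg[OF _ insert.prems(3)] insert.hyps(1) by simp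
  then have "Z_matrix_on J (schur_complement K n)"
    by (rule Z_matrix_on_schur_complement[OF insert.hyps(2) insert.prems(2)])
  moreover have "symmetric_on J (schur_complement K n)"
    by (rule symmetric_on_schur_complement[OF symmetric_on_subset[OF insert.prems(1) subset_insertI]])
  moreover have "psd_on J (schur_complement K n)"
    by (rule psd_on_schur_complement[OF insert.hyps insert.prems(1,3)])
  ultimately obtain w where "\<forall>i\<in>J. 0 < w i"
      "\<forall>i\<in>J. 0 \<le> (\<Sum>j\<in>J. schur_complement K n i j * w j)"
    using insert.IH by blast
  then show ?case
    using pos_vector_insert[OF insert.hyps insert.prems] by blast
qed

lemma symmetric_matrix_nth: "symmetric_matrix Y \<Longrightarrow> Y $ i $ j = Y $ j $ i"
  unfolding symmetric_matrix_def by (metis transpose_def vec_lambda_beta)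

lemma diag_matrix_mult_nth: "(diag_matrix d ** A) $ i $ j = d i * A $ i $ j"
proof -
  have "(diag_matrix d ** A) $ i $ j = (\<Sum>k\<in>UNIV. (if i = k then d i else 0) * A $ k $ j)"
    by (simp add: matrix_matrix_mult_def diag_matrix_def)
  also have "\<dots> = (\<Sum>k\<in>UNIV. if k = i then d i * A $ k $ j else 0)"
    by (intro sum.cong) auto
  finally show ?thesis by simp
qed

lemma mult_diag_matrix_nth: "(A ** diag_matrix d) $ i $ j = A $ i $ j * d j"
proof -
  have "(A ** diag_matrix d) $ i $ j = (\<Sum>k\<in>UNIV. A $ i $ k * (if k = j then d k else 0))"
    by (simp add: matrix_matrix_mult_def diag_matrix_def)
  also have "\<dots> = (\<Sum>k\<in>UNIV. if k = j then A $ i $ k * d k else 0)"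
    by (intro sum.cong) auto
  finally show ?thesis by simp
qed

lemma transpose_diag_matrix: "transpose (diag_matrix d) = diag_matrix d"
  unfolding transpose_def diag_matrix_def by (simp add: vec_eq_iff)

lemma symmetric_matrix_diag_congruence:
  "symmetric_matrix Y \<Longrightarrow> symmetric_matrix (diag_matrix d ** Y ** diag_matrix d)"
  unfolding symmetric_matrix_def
  by (simp add: matrix_transpose_mul transpose_diag_matrix matrix_mul_assoc)

lemma scaled_diag_dominantI:
  fixes Y :: "real ^'n::finite^'n"
  assumes sym: "symmetric_matrix Y" and pos: "\<forall>i. 0 < w i"
    and row: "\<forall>i. (\<Sum>j\<in>UNIV - {i}. \<bar>Y $ i $ j\<bar> * w j) \<le> Y $ i $ i * w i"
  shows "scaled_diag_dominant Y"
proof -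
  define Z where "Z = diag_matrix w ** Y ** diag_matrix w"
  have Z_nth: "Z $ i $ j = w i * Y $ i $ j * w j" for i j
    unfolding Z_def mult_diag_matrix_nth diag_matrix_mult_nth ..
  have "diag_dominant Z"
    unfolding diag_dominant_def
  proof (intro conjI allI)
    show "symmetric_matrix Z"
      unfolding Z_def using sym by (rule symmetric_matrix_diag_congruence)
  next
    fix i
    have "(\<Sum>j\<in>UNIV - {i}. \<bar>Z $ i $ j\<bar>) = w i * (\<Sum>j\<in>UNIV - {i}. \<bar>Y $ i $ j\<bar> * w j)"
      unfolding Z_nth sum_distrib_left using pos
      by (intro sum.cong refl) (simp add: abs_mult less_imp_le)
    also have "\<dots> \<le> Z $ i $ i"
      unfolding Z_nth using row pos by (simp add: mult_left_mono mult_ac)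
    finally show "(\<Sum>j\<in>UNIV - {i}. \<bar>Z $ i $ j\<bar>) \<le> Z $ i $ i" .
  qed
  moreover have "Y $ i $ j = 1 / w i * Z $ i $ j * (1 / w j)" for i j
    using pos[rule_format, of i] pos[rule_format, of j] unfolding Z_nth by simp
  then have "Y = diag_matrix (\<lambda>i. 1 / w i) ** Z ** diag_matrix (\<lambda>i. 1 / w i)"
    by (simp add: vec_eq_iff diag_matrix_mult_nth mult_diag_matrix_nth)
  ultimately show ?thesis
    unfolding scaled_diag_dominant_def using pos
    by (intro exI[of _ "\<lambda>i. 1 / w i"] exI[of _ Z]) simp
qed

definition comparison_matrix :: "real ^'n^'n \<Rightarrow> 'n \<Rightarrow> 'n \<Rightarrow> real" where
  "comparison_matrix Y i j = (if i = j then Y $ i $ i else - \<bar>Y $ i $ j\<bar>)"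

lemma sum_comparison_matrix:
  fixes Y :: "real ^'n::finite^'n"
  shows "(\<Sum>j\<in>UNIV. comparison_matrix Y i j * w j)
     = Y $ i $ i * w i - (\<Sum>j\<in>UNIV - {i}. \<bar>Y $ i $ j\<bar> * w j)"
proof -
  have "(\<Sum>j\<in>UNIV. comparison_matrix Y i j * w j)
      = comparison_matrix Y i i * w i + (\<Sum>j\<in>UNIV - {i}. comparison_matrix Y i j * w j)"
    by (rule sum.remove) simp_all
  also have "(\<Sum>j\<in>UNIV - {i}. comparison_matrix Y i j * w j)
      = - (\<Sum>j\<in>UNIV - {i}. \<bar>Y $ i $ j\<bar> * w j)"
    unfolding comparison_matrix_def by (simp add: sum_negf[symmetric])
  finally show ?thesis
    by (simp add: comparison_matrix_def)
qed

lemma frobenius_comparison_matrix_minus_id: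
  "(\<Sum>i\<in>UNIV. \<Sum>j\<in>UNIV. (comparison_matrix Y i j - (if i = j then 1 else 0))\<^sup>2)
     = frob_norm_sq (Y - mat 1)"
  unfolding frob_norm_sq_def comparison_matrix_def
  by (intro sum.cong refl) (simp add: mat_def)

lemma scaled_diag_dominant_if_frobenius_dist_id_le_1:
  fixes Y :: "real ^'n::finite^'n"
  assumes sym: "symmetric_matrix Y" and dist: "frob_norm_sq (Y - mat 1) \<le> 1"
  shows "scaled_diag_dominant Y"
proof -
  let ?K = "comparison_matrix Y"
  have "psd_on UNIV ?K"
    using dist by (intro psd_on_if_frobenius_dist_id_le_1) (simp_all add: frobenius_comparison_matrix_minus_id)
  moreover have "symmetric_on UNIV ?K"
    unfolding symmetric_on_def comparison_matrix_def using symmetric_matrix_nth[OF sym] by auto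
  moreover have "Z_matrix_on UNIV ?K"
    unfolding Z_matrix_on_def comparison_matrix_def by simp
  ultimately obtain w where "\<forall>i. 0 < w i" "\<forall>i. 0 \<le> (\<Sum>j\<in>UNIV. ?K i j * w j)"
    using psd_Z_matrix_on_pos_vector[of UNIV ?K] by auto
  then show ?thesis
    using sym by (intro scaled_diag_dominantI[of Y w]) (simp_all add: sum_comparison_matrix)
qed

lemma le_one_minus_if_frobenius_budget:
  fixes N a s q :: real
  assumes N: "1 < N" and cs: "s\<^sup>2 \<le> (N - 1) * q" and budget: "a\<^sup>2 + 2 * q \<le> 2 / (N + 1)"
  shows "s \<le> 1 - a"
proof -
  have "0 \<le> (N - 1) * q"
    using cs by (rule order_trans[OF zero_le_power2])
  then have q: "0 \<le> q"
    using N by (simp add: zero_le_mult_iff)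
  have budget': "(N + 1) * (a\<^sup>2 + 2 * q) \<le> 2"
    using budget N by (simp add: pos_le_divide_eq mult.commute)
  have "2 * (N + 1) * s\<^sup>2 \<le> 2 * (N + 1) * ((N - 1) * q)"
    using cs N by (intro mult_left_mono) auto
  also have "\<dots> = (N - 1) * ((N + 1) * (a\<^sup>2 + 2 * q)) - (N - 1) * (N + 1) * a\<^sup>2"
    by (simp add: algebra_simps)
  also have "\<dots> \<le> (N - 1) * 2 - (N - 1) * (N + 1) * a\<^sup>2"
    using mult_left_mono[OF budget', of "N - 1"] N by linarith
  also have "\<dots> = 2 * (N + 1) * (1 - a)\<^sup>2 - ((N + 1) * a - 2)\<^sup>2"
    by (simp add: power2_eq_square algebra_simps)
  also have "\<dots> \<le> 2 * (N + 1) * (1 - a)\<^sup>2"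
    by simp
  finally have "s\<^sup>2 \<le> (1 - a)\<^sup>2"
    using N by simp
  moreover have "a\<^sup>2 < 1"
  proof -
    have "2 / (N + 1) < 1" using N by simp
    then show ?thesis using budget q by linarith
  qed
  then have "0 \<le> 1 - a"
    by (simp add: abs_square_less_1 abs_less_iff)
  ultimately show ?thesis
    by (rule power2_le_imp_le)
qed

lemma frob_norm_sq_ge_row_col:
  fixes A :: "real ^'n::finite^'n"
  shows "(A $ i $ i)\<^sup>2 + (\<Sum>j\<in>UNIV - {i}. (A $ i $ j)\<^sup>2 + (A $ j $ i)\<^sup>2) \<le> frob_norm_sq A"
proof -
  define R where "R k = (\<Sum>l\<in>UNIV. (A $ k $ l)\<^sup>2)" for k
  have "frob_norm_sq A = R i + (\<Sum>k\<in>UNIV - {i}. R k)"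
    unfolding frob_norm_sq_def R_def by (rule sum.remove) simp_all
  moreover have "R i = (A $ i $ i)\<^sup>2 + (\<Sum>j\<in>UNIV - {i}. (A $ i $ j)\<^sup>2)"
    unfolding R_def by (rule sum.remove) simp_all
  moreover have "(\<Sum>j\<in>UNIV - {i}. (A $ j $ i)\<^sup>2) \<le> (\<Sum>k\<in>UNIV - {i}. R k)"
    unfolding R_def by (intro sum_mono member_le_sum) auto
  ultimately show ?thesis
    by (simp add: sum.distrib)
qed

lemma diag_dominant_if_frobenius_dist_id_le:
  fixes Y :: "real ^'n::finite^'n"
  assumes N: "CARD('n) \<ge> 2" and sym: "symmetric_matrix Y"
    and dist: "frob_norm_sq (Y - mat 1) \<le> 2 / (real CARD('n) + 1)"
  shows "diag_dominant Y"
  unfolding diag_dominant_def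
proof (intro conjI allI sym)
  fix i :: 'n
  define q where "q = (\<Sum>j\<in>UNIV - {i}. (Y $ i $ j)\<^sup>2)"
  have "(\<Sum>j\<in>UNIV - {i}. ((Y - mat 1) $ i $ j)\<^sup>2 + ((Y - mat 1) $ j $ i)\<^sup>2) = 2 * q"
    unfolding q_def sum_distrib_left
  proof (intro sum.cong refl)
    fix j assume "j \<in> UNIV - {i}"
    then show "((Y - mat 1) $ i $ j)\<^sup>2 + ((Y - mat 1) $ j $ i)\<^sup>2 = 2 * (Y $ i $ j)\<^sup>2"
      using symmetric_matrix_nth[OF sym, of j i] by (simp add: mat_def)
  qed
  then have "(1 - Y $ i $ i)\<^sup>2 + 2 * q \<le> frob_norm_sq (Y - mat 1)"
    using frob_norm_sq_ge_row_col[of "Y - mat 1" i] by (simp add: mat_def power2_commute)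
  then have "(1 - Y $ i $ i)\<^sup>2 + 2 * q \<le> 2 / (real CARD('n) + 1)"
    using dist by linarith
  moreover have "(\<Sum>j\<in>UNIV - {i}. \<bar>Y $ i $ j\<bar>)\<^sup>2 \<le> (real CARD('n) - 1) * q"
    using Cauchy_Schwarz_ineq_sum[of "\<lambda>j. \<bar>Y $ i $ j\<bar>" "\<lambda>_. 1" "UNIV - {i}"]
    unfolding q_def by (simp add: card_Diff_singleton of_nat_diff mult.commute)
  moreover have "1 < real CARD('n)"
    using N by simp
  ultimately show "(\<Sum>j\<in>UNIV - {i}. \<bar>Y $ i $ j\<bar>) \<le> Y $ i $ i"
    using le_one_minus_if_frobenius_budget by fastforce
qed

theorem lemmaB2:
  fixes Y :: "real ^'n::finite^'n"
  assumes "CARD('n) \<ge> 2"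
    and "symmetric_matrix Y"
  shows "(frob_norm_sq (Y - mat 1) \<le> 1 \<longrightarrow> scaled_diag_dominant Y)
       \<and> (frob_norm_sq (Y - mat 1) \<le> 2 / (real CARD('n) + 1) \<longrightarrow> diag_dominant Y)"
  using scaled_diag_dominant_if_frobenius_dist_id_le_1[OF assms(2)]
    diag_dominant_if_frobenius_dist_id_le[OF assms] by blast

end
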